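(* Consider a multi-prover interactive proof system with entangled provers in which the verifier treats the provers $P_1,\dots,P_k$ symmetrically, i.e. the protocol is invariant under permuting the provers' questions and correspondingly inverse-permuting their answers. Then for any entangled strategy of $P_1,\dots,P_k$ with shared state $|\Psi\rangle$ that is accepted with probability $p$, there is an entangled strategy $P_1',\dots,P_k'$ with shared state $|\Psi'\rangle$, accepted with probability $p$, such that $P_1'=\cdots=P_k'$ and $|\Psi'\rangle$ is invariant under any permutation of the provers' subsystems.
   Context: An entangled strategy for $k$ provers consists of a finite-dimensional state $|\Psi\rangle$ shared among the provers (one register per prover) together with, for each prover and each round, a quantum operation acting on the received classical message and the prover's register, after which the outgoing message is obtained by a computational-basis measurement. Provers cannot communicate. *)

theory Defs
  imports "HOL-Probability.Probability_Mass_Function" "HOL-Library.FuncSet"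
begin

text \<open>
  Provers are indexed by a finite type 'p (so k = CARD('p)); questions and
  answers are finite types 'q and 'a.
  Prover i holds a register C^(d i); the joint space is the tensor product, whose
  computational basis is indexed by functions j :: 'p => nat with j i < d i.
  A local operator on C^n is a matrix given by its entries M row col.
\<close>

type_synonym ('p,'q,'a) transcript = "(('p \<Rightarrow> 'q) \<times> ('p \<Rightarrow> 'a)) list"
type_synonym mat = "nat \<Rightarrow> nat \<Rightarrow> complex"

record ('p,'q,'a) verifier =
  rounds :: nat
  next_q :: "('p,'q,'a) transcript \<Rightarrow> ('p \<Rightarrow> 'q) pmf"
  acc    :: "('p,'q,'a) transcript \<Rightarrow> real"

text \<open>Entangled strategy: register dimensions, shared state, and for each prover,
  round and received question an instrument whose outcome is the answer
  (a quantum operation followed by a computational-basis measurement of the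
  outgoing message), given by lists of Kraus operators per answer.\<close>
record ('p,'q,'a) strategy =
  dims  :: "'p \<Rightarrow> nat"
  state :: "('p \<Rightarrow> nat) \<Rightarrow> complex"
  ops   :: "'p \<Rightarrow> nat \<Rightarrow> 'q \<Rightarrow> 'a \<Rightarrow> mat list"

definition idx :: "('p \<Rightarrow> nat) \<Rightarrow> ('p \<Rightarrow> nat) set" where
  "idx d = (\<Pi>\<^sub>E i\<in>UNIV. {..<d i})"

definition norm2 :: "('p::finite \<Rightarrow> nat) \<Rightarrow> (('p \<Rightarrow> nat) \<Rightarrow> complex) \<Rightarrow> real" where
  "norm2 d \<psi> = (\<Sum>j\<in>idx d. (cmod (\<psi> j))\<^sup>2)"

definition apply_local ::
  "('p::finite \<Rightarrow> nat) \<Rightarrow> ('p \<Rightarrow> mat) \<Rightarrow> (('p \<Rightarrow> nat) \<Rightarrow> complex) \<Rightarrow> (('p \<Rightarrow> nat) \<Rightarrow> complex)" where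
  "apply_local d M \<psi> = (\<lambda>j. if j \<in> idx d
      then (\<Sum>j'\<in>idx d. (\<Prod>i\<in>UNIV. M i (j i) (j' i)) * \<psi> j') else 0)"

text \<open>Interaction: n rounds remaining, transcript t so far (its length is the
  current round index), current unnormalised joint state psi.\<close>
primrec run :: "('p::finite,'q::finite,'a::finite) verifier \<Rightarrow> ('p,'q,'a) strategy \<Rightarrow> nat
      \<Rightarrow> ('p,'q,'a) transcript \<Rightarrow> (('p \<Rightarrow> nat) \<Rightarrow> complex) \<Rightarrow> real" where
  "run V S 0 t \<psi> = acc V t * norm2 (dims S) \<psi>"
| "run V S (Suc n) t \<psi> =
     (\<Sum>q\<in>UNIV. pmf (next_q V t) q *
       (\<Sum>a\<in>UNIV. \<Sum>c\<in>(\<Pi>\<^sub>E i\<in>UNIV. {..<length (ops S i (length t) (q i) (a i))}).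
          run V S n (t @ [(q, a)])
            (apply_local (dims S) (\<lambda>i. ops S i (length t) (q i) (a i) ! c i) \<psi>)))"

definition accept_prob :: "('p::finite,'q::finite,'a::finite) verifier \<Rightarrow> ('p,'q,'a) strategy \<Rightarrow> real" where
  "accept_prob V S = run V S (rounds V) [] (state S)"

definition valid_verifier :: "('p,'q,'a) verifier \<Rightarrow> bool" where
  "valid_verifier V \<longleftrightarrow> (\<forall>t. 0 \<le> acc V t \<and> acc V t \<le> 1)"

text \<open>Valid strategy: positive finite dimensions, unit state vector, and every
  instrument is trace preserving: sum over answers and Kraus operators of K^* K = I.\<close>
definition valid_strategy :: "('p::finite,'q::finite,'a::finite) verifier \<Rightarrow> ('p,'q,'a) strategy \<Rightarrow> bool" where
  "valid_strategy V S \<longleftrightarrow>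
     (\<forall>i. 0 < dims S i) \<and>
     (\<forall>j. j \<notin> idx (dims S) \<longrightarrow> state S j = 0) \<and>
     norm2 (dims S) (state S) = 1 \<and>
     (\<forall>i r q. r < rounds V \<longrightarrow>
        (\<forall>j<dims S i. \<forall>j'<dims S i.
           (\<Sum>a\<in>UNIV. sum_list (map (\<lambda>K. \<Sum>l<dims S i. cnj (K l j) * K l j') (ops S i r q a)))
             = (if j = j' then 1 else 0)))"

definition perm_transcript :: "('p \<Rightarrow> 'p) \<Rightarrow> ('p,'q,'a) transcript \<Rightarrow> ('p,'q,'a) transcript" where
  "perm_transcript \<sigma> t = map (\<lambda>(q, a). (q \<circ> \<sigma>, a \<circ> \<sigma>)) t"

definition symmetric_verifier :: "('p,'q,'a) verifier \<Rightarrow> bool" where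
  "symmetric_verifier V \<longleftrightarrow> (\<forall>\<sigma> t. bij \<sigma> \<longrightarrow>
     next_q V (perm_transcript \<sigma> t) = map_pmf (\<lambda>q. q \<circ> \<sigma>) (next_q V t) \<and>
     acc V (perm_transcript \<sigma> t) = acc V t)"

end

theory Submission
  imports Defs "HOL-Combinatorics.Permutations"
begin

(*
  Every prover of the new strategy receives a register C^N = C^k (x) C^D, where k is the
  number of provers and D the largest register dimension of the old strategy: the first
  factor holds a "role" m (a prover of the old strategy), the second the register of
  that role (padded).  The shared state is the uniform superposition, over all
  bijections l, of the old state in which prover i plays role l i; every prover applies
  the same operation, namely "act as the prover named in my role register".

  Then, for the role embedding,
  different role assignments span orthogonal sectors which the new Kraus operators
  preserve; hence the new interaction splits into the sum of the relabelled
  interactions (run_superposition).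
*)

lemma idx_iff: "j \<in> idx d \<longleftrightarrow> (\<forall>i. j i < d i)"
  by (auto simp: idx_def PiE_iff)

lemma finite_idx [simp]: "finite (idx (d :: 'p::finite \<Rightarrow> nat))"
  unfolding idx_def by (intro finite_PiE) auto

lemma apply_local_zero_factor:
  assumes "\<And>x y. M i x y = 0"
  shows "apply_local d M \<psi> = (\<lambda>_. 0)"
proof -
  have factor_zero: "(\<Prod>i\<in>UNIV. M i (j i) (j' i)) = 0" for j j'
    using assms by (intro prod_zero) auto
  show ?thesis unfolding apply_local_def factor_zero by (intro ext) simp
qed

lemma apply_local_sum:
  "finite A \<Longrightarrow> apply_local d M (\<lambda>J. \<Sum>l\<in>A. v l J) = (\<lambda>J. \<Sum>l\<in>A. apply_local d M (v l) J)"
  by (auto simp: apply_local_def sum_distrib_left intro!: ext sum.swap)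

lemma apply_local_scale: "apply_local d M (\<lambda>J. c * v J) = (\<lambda>J. c * apply_local d M v J)"
  by (auto simp: apply_local_def sum_distrib_left mult.left_commute intro!: ext sum.cong)

lemma norm2_scale: "norm2 d (\<lambda>J. c * v J) = (cmod c)\<^sup>2 * norm2 d v"
  by (simp add: norm2_def norm_mult power_mult_distrib sum_distrib_left)

lemma apply_local_zero: "apply_local d M (\<lambda>_. 0) = (\<lambda>_. 0)"
  by (intro ext) (simp add: apply_local_def)

lemma run_zero: "run V S n t (\<lambda>_. 0) = 0"
  by (induction n arbitrary: t) (simp_all add: norm2_def apply_local_zero)

lemma run_scale: "run V S n t (\<lambda>j. c * \<psi> j) = (cmod c)\<^sup>2 * run V S n t \<psi>"
  by (induction n arbitrary: t \<psi>)
     (simp_all add: norm2_scale apply_local_scale sum_distrib_left mult.left_commute)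

lemma bij_comp_inv [simp]: "bij l \<Longrightarrow> l \<circ> inv l = id"
  using bij_is_surj surj_iff by blast

lemma bij_inv_comp [simp]: "bij l \<Longrightarrow> inv l \<circ> l = id"
  using bij_is_inj inj_iff by blast

lemma bij_betw_comp_right:
  assumes "bij \<mu>"
  shows "bij_betw (\<lambda>c. c \<circ> \<mu>) (PiE UNIV A) (PiE UNIV (A \<circ> \<mu>))"
proof (rule bij_betw_byWitness[where f'="\<lambda>c. c \<circ> inv \<mu>"])
  show "\<forall>c\<in>PiE UNIV A. c \<circ> \<mu> \<circ> inv \<mu> = c" "\<forall>c\<in>PiE UNIV (A \<circ> \<mu>). c \<circ> inv \<mu> \<circ> \<mu> = c"
    using assms by (simp_all add: comp_assoc)
  show "(\<lambda>c. c \<circ> \<mu>) ` PiE UNIV A \<subseteq> PiE UNIV (A \<circ> \<mu>)"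
    by (auto simp: PiE_iff)
  show "(\<lambda>c. c \<circ> inv \<mu>) ` PiE UNIV (A \<circ> \<mu>) \<subseteq> PiE UNIV A"
    using assms by (auto simp: PiE_iff) (metis bij_inv_eq_iff)
qed

lemma sum_comp_right_PiE:
  "bij \<mu> \<Longrightarrow> (\<Sum>c\<in>PiE UNIV A. h (c \<circ> \<mu>)) = (\<Sum>c\<in>PiE UNIV (A \<circ> \<mu>). h c)"
  by (rule sum.reindex_bij_betw[OF bij_betw_comp_right])

lemma sum_comp_right_UNIV:
  "bij \<mu> \<Longrightarrow> (\<Sum>c\<in>UNIV. h (c \<circ> \<mu>)) = (\<Sum>c\<in>UNIV. h c)"
  using sum_comp_right_PiE[where \<mu>=\<mu> and A="\<lambda>_. UNIV" and h=h] by (simp add: PiE_UNIV_domain)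

definition relabel_vec :: "('p \<Rightarrow> 'p) \<Rightarrow> (('p \<Rightarrow> nat) \<Rightarrow> complex) \<Rightarrow> ('p \<Rightarrow> nat) \<Rightarrow> complex" where
  "relabel_vec l \<psi> = (\<lambda>j. \<psi> (j \<circ> inv l))"

definition relabel :: "('p \<Rightarrow> 'p) \<Rightarrow> ('p, 'q, 'a) strategy \<Rightarrow> ('p, 'q, 'a) strategy" where
  "relabel l S = \<lparr>dims = dims S \<circ> l, state = relabel_vec l (state S), ops = (\<lambda>i. ops S (l i))\<rparr>"

lemma dims_relabel [simp]: "dims (relabel l S) = dims S \<circ> l"
  and ops_relabel [simp]: "ops (relabel l S) i = ops S (l i)"
  by (simp_all add: relabel_def)

lemma sum_idx_comp_right:
  "bij l \<Longrightarrow> (\<Sum>c\<in>idx d. h (c \<circ> l)) = (\<Sum>c\<in>idx (d \<circ> l). h c)"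
  using sum_comp_right_PiE[where A="\<lambda>i. {..<d i}"] by (simp add: idx_def comp_def)

lemma norm2_relabel_vec:
  fixes l :: "'p::finite \<Rightarrow> 'p"
  assumes "bij l"
  shows "norm2 (d \<circ> l) (relabel_vec l \<psi>) = norm2 d \<psi>"
proof -
  have "norm2 d \<psi> = (\<Sum>c\<in>idx d. (cmod (relabel_vec l \<psi> (c \<circ> l)))\<^sup>2)"
    using assms by (simp add: norm2_def relabel_vec_def comp_assoc)
  also have "\<dots> = norm2 (d \<circ> l) (relabel_vec l \<psi>)"
    unfolding norm2_def by (rule sum_idx_comp_right[OF assms])
  finally show ?thesis ..
qed

lemma apply_local_relabel_vec:
  fixes l :: "'p::finite \<Rightarrow> 'p"
  assumes "bij l"
  shows "apply_local (d \<circ> l) (\<lambda>i. M (l i)) (relabel_vec l \<psi>) = relabel_vec l (apply_local d M \<psi>)"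
proof (rule ext)
  fix j :: "'p \<Rightarrow> nat"
  have idx_iff_comp: "j \<in> idx (d \<circ> l) \<longleftrightarrow> j \<circ> inv l \<in> idx d"
    using assms by (simp add: idx_iff) (metis bij_inv_eq_iff)
  have factor: "(\<Prod>i\<in>UNIV. M (l i) (j i) (c (l i))) = (\<Prod>m\<in>UNIV. M m ((j \<circ> inv l) m) (c m))" for c
    using prod.reindex_bij_betw[OF assms[unfolded bij_def, folded bij_betw_def],
        of "\<lambda>m. M m ((j \<circ> inv l) m) (c m)"] assms
    by (simp add: bij_is_inj)
  have "(\<Sum>j'\<in>idx (d \<circ> l). (\<Prod>i\<in>UNIV. M (l i) (j i) (j' i)) * \<psi> (j' \<circ> inv l))
      = (\<Sum>c\<in>idx d. (\<Prod>i\<in>UNIV. M (l i) (j i) ((c \<circ> l) i)) * \<psi> (c \<circ> l \<circ> inv l))"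
    by (rule sum_idx_comp_right[OF assms, symmetric])
  also have "\<dots> = (\<Sum>c\<in>idx d. (\<Prod>m\<in>UNIV. M m ((j \<circ> inv l) m) (c m)) * \<psi> c)"
    using assms by (simp add: factor comp_assoc)
  finally show "apply_local (d \<circ> l) (\<lambda>i. M (l i)) (relabel_vec l \<psi>) j = relabel_vec l (apply_local d M \<psi>) j"
    by (simp add: apply_local_def relabel_vec_def idx_iff_comp)
qed

lemma length_perm_transcript [simp]: "length (perm_transcript \<mu> t) = length t"
  by (simp add: perm_transcript_def)

lemma perm_transcript_snoc:
  "perm_transcript \<mu> (t @ [(q, a)]) = perm_transcript \<mu> t @ [(q \<circ> \<mu>, a \<circ> \<mu>)]"
  by (simp add: perm_transcript_def)

lemma pmf_next_q_perm:
  fixes V :: "('p, 'q, 'a) verifier" and \<mu> :: "'p \<Rightarrow> 'p"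
  assumes "symmetric_verifier V" "bij \<mu>"
  shows "pmf (next_q V (perm_transcript \<mu> t)) (q \<circ> \<mu>) = pmf (next_q V t) q"
proof -
  have "inj (\<lambda>q :: 'p \<Rightarrow> 'q. q \<circ> \<mu>)"
    by (rule inj_on_inverseI[where g="\<lambda>q. q \<circ> inv \<mu>"]) (simp add: assms(2) comp_assoc)
  then show ?thesis
    using pmf_map_inj' assms unfolding symmetric_verifier_def by metis
qed

(* One round of the interaction: relabelling questions, answers and Kraus choices by a
   permutation is absorbed by the symmetry of the verifier. *)
lemma sum_round_relabel:
  fixes V :: "('p::finite, 'q::finite, 'a::finite) verifier"
  assumes sym: "symmetric_verifier V" and l: "bij l"
  shows "(\<Sum>q\<in>UNIV. pmf (next_q V t) q * (\<Sum>a\<in>UNIV.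
            \<Sum>c\<in>PiE UNIV (\<lambda>i. {..<length (ops S (l i) r (q i) (a i))}).
              G (q \<circ> inv l) (a \<circ> inv l) (c \<circ> inv l)))
       = (\<Sum>q\<in>UNIV. pmf (next_q V (perm_transcript (inv l) t)) q * (\<Sum>a\<in>UNIV.
            \<Sum>c\<in>PiE UNIV (\<lambda>m. {..<length (ops S m r (q m) (a m))}). G q a c))"
proof -
  have inv_l: "bij (inv l)" using l by (rule bij_imp_bij_inv)
  define A where "A q a = (\<lambda>m. {..<length (ops S m r (q m) (a m))})" for q a
  define H where "H q a = (\<Sum>c\<in>PiE UNIV (A q a). G q a c)" for q a
  have choices: "(\<lambda>i. {..<length (ops S (l i) r (q i) (a i))}) = A (q \<circ> inv l) (a \<circ> inv l) \<circ> l" for q a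
    using l by (simp add: A_def bij_is_inj comp_def)
  have kraus_sum: "(\<Sum>c\<in>PiE UNIV (A (q \<circ> inv l) (a \<circ> inv l) \<circ> l). G (q \<circ> inv l) (a \<circ> inv l) (c \<circ> inv l))
      = H (q \<circ> inv l) (a \<circ> inv l)" for q a
    using sum_comp_right_PiE[OF inv_l, where A="A (q \<circ> inv l) (a \<circ> inv l) \<circ> l"] l
    by (simp add: H_def comp_assoc)
  have "(\<Sum>q\<in>UNIV. pmf (next_q V t) q * (\<Sum>a\<in>UNIV.
            \<Sum>c\<in>PiE UNIV (\<lambda>i. {..<length (ops S (l i) r (q i) (a i))}).
              G (q \<circ> inv l) (a \<circ> inv l) (c \<circ> inv l)))
      = (\<Sum>q\<in>UNIV. pmf (next_q V t) q * (\<Sum>a\<in>UNIV. H (q \<circ> inv l) (a \<circ> inv l)))"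
    by (simp only: choices kraus_sum)
  also have "\<dots> = (\<Sum>q\<in>UNIV. pmf (next_q V (perm_transcript (inv l) t)) (q \<circ> inv l)
      * (\<Sum>a\<in>UNIV. H (q \<circ> inv l) a))"
    by (simp add: pmf_next_q_perm[OF sym inv_l] sum_comp_right_UNIV[OF inv_l])
  also have "\<dots> = (\<Sum>q\<in>UNIV. pmf (next_q V (perm_transcript (inv l) t)) q * (\<Sum>a\<in>UNIV. H q a))"
    by (rule sum_comp_right_UNIV[OF inv_l,
          where h="\<lambda>q. pmf (next_q V (perm_transcript (inv l) t)) q * (\<Sum>a\<in>UNIV. H q a)"])
  finally show ?thesis by (simp add: H_def A_def)
qed

lemma run_relabel:
  fixes V :: "('p::finite, 'q::finite, 'a::finite) verifier"
  assumes sym: "symmetric_verifier V" and l: "bij l"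
  shows "run V (relabel l S) n t (relabel_vec l \<psi>) = run V S n (perm_transcript (inv l) t) \<psi>"
proof (induction n arbitrary: t \<psi>)
  case 0
  show ?case
    using sym l bij_imp_bij_inv[OF l]
    by (simp add: relabel_def norm2_relabel_vec symmetric_verifier_def)
next
  case (Suc n)
  define G where "G q a c = run V S n (perm_transcript (inv l) t @ [(q, a)])
      (apply_local (dims S) (\<lambda>m. ops S m (length t) (q m) (a m) ! c m) \<psi>)" for q a c
  have round: "run V (relabel l S) n (t @ [(q, a)])
        (apply_local (dims (relabel l S)) (\<lambda>i. ops (relabel l S) i (length t) (q i) (a i) ! c i)
          (relabel_vec l \<psi>))
      = G (q \<circ> inv l) (a \<circ> inv l) (c \<circ> inv l)" for q a c
  proof -
    define M where "M = (\<lambda>m. ops S m (length t) ((q \<circ> inv l) m) ((a \<circ> inv l) m) ! (c \<circ> inv l) m)"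
    have "(\<lambda>i. ops (relabel l S) i (length t) (q i) (a i) ! c i) = (\<lambda>i. M (l i))"
      using l by (simp add: M_def bij_is_inj)
    then have "run V (relabel l S) n (t @ [(q, a)])
        (apply_local (dims (relabel l S)) (\<lambda>i. ops (relabel l S) i (length t) (q i) (a i) ! c i)
          (relabel_vec l \<psi>))
      = run V (relabel l S) n (t @ [(q, a)]) (relabel_vec l (apply_local (dims S) M \<psi>))"
      by (simp add: apply_local_relabel_vec[OF l])
    also have "\<dots> = run V S n (perm_transcript (inv l) (t @ [(q, a)])) (apply_local (dims S) M \<psi>)"
      by (rule Suc.IH)
    also have "\<dots> = G (q \<circ> inv l) (a \<circ> inv l) (c \<circ> inv l)"
      by (simp add: G_def M_def perm_transcript_snoc)
    finally show ?thesis .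
  qed
  show ?case
    using sum_round_relabel[OF sym l, where t=t and r="length t" and S=S and G=G]
    by (simp only: run.simps(2) round) (simp add: G_def)
qed

(* Kraus lists of different lengths are padded with zero operators so that all provers
   can choose among the same number of Kraus indices; padding changes nothing. *)
definition kraus_nth :: "mat list \<Rightarrow> nat \<Rightarrow> mat" where
  "kraus_nth Ks c = (if c < length Ks then Ks ! c else (\<lambda>_ _. 0))"

lemma sum_run_kraus_nth:
  assumes "\<And>i. length (Ks i) \<le> B i"
  shows "(\<Sum>c\<in>PiE UNIV (\<lambda>i. {..<B i}). run V T n t (apply_local d (\<lambda>i. kraus_nth (Ks i) (c i)) \<psi>))
       = (\<Sum>c\<in>PiE UNIV (\<lambda>i. {..<length (Ks i)}). run V T n t (apply_local d (\<lambda>i. Ks i ! c i) \<psi>))"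
proof -
  have "(\<Sum>c\<in>PiE UNIV (\<lambda>i. {..<B i}). run V T n t (apply_local d (\<lambda>i. kraus_nth (Ks i) (c i)) \<psi>))
      = (\<Sum>c\<in>PiE UNIV (\<lambda>i. {..<length (Ks i)}). run V T n t (apply_local d (\<lambda>i. kraus_nth (Ks i) (c i)) \<psi>))"
  proof (rule sum.mono_neutral_right)
    show "PiE UNIV (\<lambda>i. {..<length (Ks i)}) \<subseteq> PiE UNIV (\<lambda>i. {..<B i})"
      using assms by (auto simp: PiE_iff) (meson order_less_le_trans)
    show "\<forall>c\<in>PiE UNIV (\<lambda>i. {..<B i}) - PiE UNIV (\<lambda>i. {..<length (Ks i)}).
        run V T n t (apply_local d (\<lambda>i. kraus_nth (Ks i) (c i)) \<psi>) = 0"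
    proof
      fix c assume "c \<in> PiE UNIV (\<lambda>i. {..<B i}) - PiE UNIV (\<lambda>i. {..<length (Ks i)})"
      then obtain i where "\<not> c i < length (Ks i)" by (auto simp: PiE_iff)
      then have "apply_local d (\<lambda>i. kraus_nth (Ks i) (c i)) \<psi> = (\<lambda>_. 0)"
        by (intro apply_local_zero_factor[where i=i]) (simp add: kraus_nth_def)
      then show "run V T n t (apply_local d (\<lambda>i. kraus_nth (Ks i) (c i)) \<psi>) = 0"
        by (simp add: run_zero)
    qed
  qed (auto intro: finite_PiE)
  also have "\<dots> = (\<Sum>c\<in>PiE UNIV (\<lambda>i. {..<length (Ks i)}). run V T n t (apply_local d (\<lambda>i. Ks i ! c i) \<psi>))"
    by (intro sum.cong refl arg_cong[where f="run V T n t"] arg_cong2[where f="apply_local d"] ext)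
       (auto simp: kraus_nth_def PiE_iff)
  finally show ?thesis .
qed

lemma sum_kraus_nth:
  assumes "length Ks \<le> B" and "g (\<lambda>_ _. 0) = 0"
  shows "(\<Sum>c<B. g (kraus_nth Ks c)) = sum_list (map g Ks)"
proof -
  have "(\<Sum>c<B. g (kraus_nth Ks c)) = (\<Sum>c<length Ks. g (kraus_nth Ks c))"
    using assms by (intro sum.mono_neutral_right) (auto simp: kraus_nth_def)
  also have "\<dots> = sum_list (map g Ks)"
    by (simp add: sum_list_sum_nth atLeast0LessThan kraus_nth_def)
  finally show ?thesis .
qed

lemma sum_nested_swap:
  fixes p :: "'q \<Rightarrow> 'r::comm_semiring_0"
  shows "(\<Sum>q\<in>Q. p q * (\<Sum>a\<in>A. \<Sum>c\<in>C q a. \<Sum>l\<in>L. X l q a c))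
       = (\<Sum>l\<in>L. \<Sum>q\<in>Q. p q * (\<Sum>a\<in>A. \<Sum>c\<in>C q a. X l q a c))"
proof -
  have "(\<Sum>a\<in>A. \<Sum>c\<in>C q a. \<Sum>l\<in>L. X l q a c) = (\<Sum>l\<in>L. \<Sum>a\<in>A. \<Sum>c\<in>C q a. X l q a c)" for q
    by (simp add: sum.swap[where A="C q _" and B=L] sum.swap[where A=A and B=L])
  then show ?thesis
    by (simp add: sum_distrib_left sum.swap[where A=Q and B=L])
qed

(* The role embedding.  f numbers the provers (roles) by 0..k-1; basis vector b * D + x of
   C^N stands for position x of the register of role (role b).  Basis vectors with x beyond
   the dimension of that role are "spurious" and only serve to make the operators
   trace preserving. *)
locale role_embedding =
  fixes S :: "('p::finite, 'q::finite, 'a::finite) strategy"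
    and f :: "'p \<Rightarrow> nat"
  assumes f_bij: "bij_betw f UNIV {..<CARD('p)}"
    and dims_pos: "\<And>i. 0 < dims S i"
begin

definition role :: "nat \<Rightarrow> 'p" where
  "role = inv_into UNIV f"

definition D :: nat where
  "D = Max (range (dims S))"

definition N :: nat where
  "N = CARD('p) * D"

definition genuine :: "nat \<Rightarrow> bool" where
  "genuine y \<longleftrightarrow> y div D < CARD('p) \<and> y mod D < dims S (role (y div D))"

(* J lies in the sector of the role assignment l if every prover i holds role l i and a
   genuine position of its register; encode and lift embed a vector of the relabelled
   strategy into this sector. *)
definition in_sector :: "('p \<Rightarrow> 'p) \<Rightarrow> ('p \<Rightarrow> nat) \<Rightarrow> bool" where
  "in_sector l J \<longleftrightarrow> (\<forall>i. J i div D = f (l i) \<and> J i mod D < dims S (l i))"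

definition encode :: "('p \<Rightarrow> 'p) \<Rightarrow> ('p \<Rightarrow> nat) \<Rightarrow> 'p \<Rightarrow> nat" where
  "encode l j = (\<lambda>i. f (l i) * D + j i)"

definition lift :: "('p \<Rightarrow> 'p) \<Rightarrow> (('p \<Rightarrow> nat) \<Rightarrow> complex) \<Rightarrow> ('p \<Rightarrow> nat) \<Rightarrow> complex" where
  "lift l \<phi> J = (if in_sector l J then \<phi> (\<lambda>i. J i mod D) else 0)"

lemma role_f [simp]: "role (f m) = m"
  using f_bij by (simp add: role_def bij_betw_def)

lemma f_less_card [simp]: "f m < CARD('p)"
  using f_bij by (auto simp: bij_betw_def)

lemma dims_le_D: "dims S m \<le> D"
  unfolding D_def by (rule Max_ge) auto

lemma D_pos: "0 < D"
  using dims_le_D dims_pos less_le_trans by blast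

lemma N_pos: "0 < N"
  using D_pos by (simp add: N_def)

lemma less_dims_less_D: "x < dims S m \<Longrightarrow> x < D"
  using dims_le_D less_le_trans by blast

lemma block_div: "x < dims S m \<Longrightarrow> (b * D + x) div D = b"
  using less_dims_less_D[of x m] by simp

lemma block_mod: "x < dims S m \<Longrightarrow> (b * D + x) mod D = x"
  using less_dims_less_D[of x m] by simp

lemma genuine_less_N: "genuine y \<Longrightarrow> y < N"
proof -
  assume "genuine y"
  then have "Suc (y div D) \<le> CARD('p)" by (simp add: genuine_def)
  then have "Suc (y div D) * D \<le> N" unfolding N_def by (rule mult_right_mono) simp
  moreover have "y < Suc (y div D) * D"
    using D_pos by (metis add.commute mod_less_divisor mult_Suc div_mult_mod_eq add_less_cancel_left)
  ultimately show ?thesis by linarith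
qed

lemma in_sector_genuine: "in_sector l J \<Longrightarrow> genuine (J i)"
  by (simp add: in_sector_def genuine_def)

lemma in_sector_idx: "in_sector l J \<Longrightarrow> J \<in> idx (\<lambda>_. N)"
  using in_sector_genuine genuine_less_N by (auto simp: idx_iff)

lemma in_sector_unique: "in_sector l J \<Longrightarrow> in_sector l' J \<Longrightarrow> l = l'"
  unfolding in_sector_def by (metis role_f ext)

lemma encode_mod_div:
  assumes "j \<in> idx (dims S \<circ> l)"
  shows "encode l j i mod D = j i" and "encode l j i div D = f (l i)"
proof -
  have "j i < dims S (l i)" using assms by (simp add: idx_iff)
  then show "encode l j i mod D = j i" "encode l j i div D = f (l i)"
    unfolding encode_def by (rule block_mod, rule block_div)
qed

lemma in_sector_encode:
  assumes "j \<in> idx (dims S \<circ> l)"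
  shows "in_sector l (encode l j)"
  using encode_mod_div[OF assms] assms by (simp add: in_sector_def idx_iff)

lemma in_sector_mod_idx: "in_sector l J \<Longrightarrow> (\<lambda>i. J i mod D) \<in> idx (dims S \<circ> l)"
  by (simp add: in_sector_def idx_iff)

lemma encode_in_sector:
  assumes "in_sector l J"
  shows "encode l (\<lambda>i. J i mod D) = J"
proof
  fix i
  have "J i div D = f (l i)" using assms by (simp add: in_sector_def)
  then show "encode l (\<lambda>i. J i mod D) i = J i"
    using div_mult_mod_eq[of "J i" D] by (simp add: encode_def)
qed

lemma lift_encode: "j \<in> idx (dims S \<circ> l) \<Longrightarrow> lift l \<phi> (encode l j) = \<phi> j"
  using in_sector_encode encode_mod_div(1) by (simp add: lift_def)

lemma sum_sector:
  assumes "\<And>J. J \<in> idx (\<lambda>_. N) \<Longrightarrow> \<not> in_sector l J \<Longrightarrow> F J = 0"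
  shows "(\<Sum>J\<in>idx (\<lambda>_. N). F J) = (\<Sum>j\<in>idx (dims S \<circ> l). F (encode l j))"
proof -
  have "(\<Sum>J\<in>idx (\<lambda>_. N). F J) = (\<Sum>J\<in>{J. in_sector l J}. F J)"
    using assms in_sector_idx by (intro sum.mono_neutral_right) auto
  also have "\<dots> = (\<Sum>j\<in>idx (dims S \<circ> l). F (encode l j))"
  proof (rule sum.reindex_bij_witness[where i="encode l" and j="\<lambda>J i. J i mod D"])
    fix j assume "j \<in> idx (dims S \<circ> l)"
    then show "(\<lambda>i. encode l j i mod D) = j" "encode l j \<in> {J. in_sector l J}"
      by (auto simp: encode_mod_div in_sector_encode)
  qed (auto simp: encode_in_sector in_sector_mod_idx)
  finally show ?thesis .
qed

lemma norm2_lift: "norm2 (\<lambda>_. N) (lift l \<phi>) = norm2 (dims S \<circ> l) \<phi>"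
proof -
  have "norm2 (\<lambda>_. N) (lift l \<phi>) = (\<Sum>j\<in>idx (dims S \<circ> l). (cmod (lift l \<phi> (encode l j)))\<^sup>2)"
    unfolding norm2_def by (rule sum_sector) (simp add: lift_def)
  then show ?thesis by (simp add: norm2_def lift_encode)
qed

(* Lifts of different assignments are orthogonal, so squared norms add up. *)
lemma cmod_sum_lift:
  assumes "finite \<Lambda>"
  shows "(cmod (\<Sum>l\<in>\<Lambda>. lift l (\<phi> l) J))\<^sup>2 = (\<Sum>l\<in>\<Lambda>. (cmod (lift l (\<phi> l) J))\<^sup>2)"
proof (cases "\<exists>l\<in>\<Lambda>. in_sector l J")
  case True
  then obtain l where l: "l \<in> \<Lambda>" "in_sector l J" by blast
  have others: "lift l' (\<phi> l') J = 0" if "l' \<in> \<Lambda> - {l}" for l'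
    using that l in_sector_unique by (auto simp: lift_def)
  have "(\<Sum>l'\<in>\<Lambda>. lift l' (\<phi> l') J) = lift l (\<phi> l) J"
    by (subst sum.remove[OF assms l(1)]) (simp add: sum.neutral others)
  moreover have "(\<Sum>l'\<in>\<Lambda>. (cmod (lift l' (\<phi> l') J))\<^sup>2) = (cmod (lift l (\<phi> l) J))\<^sup>2"
    by (subst sum.remove[OF assms l(1)]) (simp add: sum.neutral others)
  ultimately show ?thesis by simp
next
  case False
  then show ?thesis by (simp add: lift_def)
qed

lemma norm2_sum_lift:
  "finite \<Lambda> \<Longrightarrow> norm2 (\<lambda>_. N) (\<lambda>J. \<Sum>l\<in>\<Lambda>. lift l (\<phi> l) J) = (\<Sum>l\<in>\<Lambda>. norm2 (dims S \<circ> l) (\<phi> l))"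
proof -
  assume fin: "finite \<Lambda>"
  have "norm2 (\<lambda>_. N) (\<lambda>J. \<Sum>l\<in>\<Lambda>. lift l (\<phi> l) J)
      = (\<Sum>J\<in>idx (\<lambda>_. N). \<Sum>l\<in>\<Lambda>. (cmod (lift l (\<phi> l) J))\<^sup>2)"
    unfolding norm2_def using fin by (simp only: cmod_sum_lift)
  also have "\<dots> = (\<Sum>l\<in>\<Lambda>. norm2 (\<lambda>_. N) (lift l (\<phi> l)))"
    unfolding norm2_def by (rule sum.swap)
  finally show ?thesis by (simp add: norm2_lift)
qed

(* The common Kraus operators: block diagonal, acting on the block of role m as the
   (padded) Kraus operator of prover m, and as the identity on spurious vectors,
   attributed to the answer undefined and the Kraus index 0. *)
definition role_kraus :: "nat \<Rightarrow> 'q \<Rightarrow> 'a \<Rightarrow> nat \<Rightarrow> mat" where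
  "role_kraus r q a c y y' =
     (if genuine y \<and> genuine y' then
        (if y div D = y' div D then kraus_nth (ops S (role (y div D)) r q a) c (y mod D) (y' mod D) else 0)
      else if y = y' \<and> a = undefined \<and> c = 0 then 1 else 0)"

definition num_kraus :: "nat \<Rightarrow> 'q \<Rightarrow> 'a \<Rightarrow> nat" where
  "num_kraus r q a = max 1 (Max (range (\<lambda>m. length (ops S m r q a))))"

definition amp :: complex where
  "amp = of_real (1 / sqrt (fact CARD('p)))"

definition sym_state :: "('p \<Rightarrow> nat) \<Rightarrow> complex" where
  "sym_state = (\<lambda>J. \<Sum>l\<in>{l. bij l}. lift l (relabel_vec l (\<lambda>j. amp * state S j)) J)"

definition sym_strategy :: "('p, 'q, 'a) strategy" where
  "sym_strategy = \<lparr>dims = (\<lambda>_. N), state = sym_state,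
     ops = (\<lambda>i r q a. map (role_kraus r q a) [0..<num_kraus r q a])\<rparr>"

lemma length_le_num_kraus: "length (ops S m r q a) \<le> num_kraus r q a"
  unfolding num_kraus_def by (simp add: le_max_iff_disj)

lemma num_kraus_pos: "0 < num_kraus r q a"
  by (simp add: num_kraus_def)

lemma in_sector_div: "in_sector l J \<Longrightarrow> J i div D = f (l i)"
  by (simp add: in_sector_def)

lemma role_kraus_sector:
  assumes "in_sector l J" "in_sector l J'"
  shows "role_kraus r q a c (J i) (J' i) = kraus_nth (ops S (l i) r q a) c (J i mod D) (J' i mod D)"
  using assms by (simp add: role_kraus_def in_sector_genuine in_sector_div)

lemma role_kraus_off_sector:
  assumes "\<not> in_sector l J" "in_sector l J'"
  shows "\<exists>i. role_kraus r (q i) (a i) (c i) (J i) (J' i) = 0"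
proof -
  obtain i where i: "J i div D \<noteq> f (l i) \<or> \<not> J i mod D < dims S (l i)"
    using assms(1) unfolding in_sector_def by blast
  have J': "genuine (J' i)" "J' i div D = f (l i)"
    using assms(2) in_sector_genuine in_sector_div by auto
  have "role_kraus r (q i) (a i) (c i) (J i) (J' i) = 0"
  proof (cases "genuine (J i)")
    case True
    then have "J i div D \<noteq> J' i div D" using i J' by (auto simp: genuine_def)
    then show ?thesis by (auto simp: role_kraus_def)
  next
    case False
    then show ?thesis using J' by (auto simp: role_kraus_def)
  qed
  then show ?thesis by blast
qed

lemma apply_lift:
  "apply_local (\<lambda>_. N) (\<lambda>i. role_kraus r (q i) (a i) (c i)) (lift l \<phi>)
     = lift l (apply_local (dims S \<circ> l) (\<lambda>i. kraus_nth (ops S (l i) r (q i) (a i)) (c i)) \<phi>)"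
    (is "apply_local _ ?R _ = lift l (apply_local _ ?K \<phi>)")
proof
  fix J
  show "apply_local (\<lambda>_. N) ?R (lift l \<phi>) J = lift l (apply_local (dims S \<circ> l) ?K \<phi>) J"
  proof (cases "in_sector l J")
    case True
    have "apply_local (\<lambda>_. N) ?R (lift l \<phi>) J
        = (\<Sum>J'\<in>idx (\<lambda>_. N). (\<Prod>i\<in>UNIV. ?R i (J i) (J' i)) * lift l \<phi> J')"
      using in_sector_idx[OF True] by (simp add: apply_local_def)
    also have "\<dots> = (\<Sum>j\<in>idx (dims S \<circ> l). (\<Prod>i\<in>UNIV. ?R i (J i) (encode l j i)) * lift l \<phi> (encode l j))"
      by (rule sum_sector) (simp add: lift_def)
    also have "\<dots> = (\<Sum>j\<in>idx (dims S \<circ> l). (\<Prod>i\<in>UNIV. ?K i (J i mod D) (j i)) * \<phi> j)"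
      using True by (intro sum.cong refl)
        (simp add: role_kraus_sector in_sector_encode encode_mod_div lift_encode)
    also have "\<dots> = lift l (apply_local (dims S \<circ> l) ?K \<phi>) J"
      using True in_sector_mod_idx by (simp add: lift_def apply_local_def)
    finally show ?thesis .
  next
    case False
    have vanish: "(\<Prod>i\<in>UNIV. ?R i (J i) (J' i)) * lift l \<phi> J' = 0" for J'
    proof (cases "in_sector l J'")
      case True
      then obtain i where "?R i (J i) (J' i) = 0"
        using role_kraus_off_sector[OF False] by blast
      then have "(\<Prod>i\<in>UNIV. ?R i (J i) (J' i)) = 0" by (intro prod_zero) auto
      then show ?thesis by simp
    qed (simp add: lift_def)
    have "apply_local (\<lambda>_. N) ?R (lift l \<phi>) J = 0"
      unfolding apply_local_def by (simp add: vanish)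
    then show ?thesis using False by (simp add: lift_def)
  qed
qed

lemma run_superposition:
  assumes "finite \<Lambda>"
  shows "run V sym_strategy n t (\<lambda>J. \<Sum>l\<in>\<Lambda>. lift l (\<phi> l) J)
       = (\<Sum>l\<in>\<Lambda>. run V (relabel l S) n t (\<phi> l))"
proof (induction n arbitrary: t \<phi>)
  case 0
  show ?case
    using assms by (simp add: sym_strategy_def norm2_sum_lift sum_distrib_left relabel_def)
next
  case (Suc n)
  define r where "r = length t"
  define X where "X l q a c = run V (relabel l S) n (t @ [(q, a)])
      (apply_local (dims S \<circ> l) (\<lambda>i. kraus_nth (ops S (l i) r (q i) (a i)) (c i)) (\<phi> l))" for l q a c
  have step: "run V sym_strategy n (t @ [(q, a)])
        (apply_local (\<lambda>_. N) (\<lambda>i. role_kraus r (q i) (a i) (c i)) (\<lambda>J. \<Sum>l\<in>\<Lambda>. lift l (\<phi> l) J))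
      = (\<Sum>l\<in>\<Lambda>. X l q a c)" for q a c
    unfolding apply_local_sum[OF assms] apply_lift X_def by (rule Suc.IH)
  have "run V sym_strategy (Suc n) t (\<lambda>J. \<Sum>l\<in>\<Lambda>. lift l (\<phi> l) J)
      = (\<Sum>q\<in>UNIV. pmf (next_q V t) q * (\<Sum>a\<in>UNIV.
           \<Sum>c\<in>PiE UNIV (\<lambda>i. {..<num_kraus r (q i) (a i)}). \<Sum>l\<in>\<Lambda>. X l q a c))"
    by (auto simp: sym_strategy_def r_def PiE_iff step[symmetric] intro!: sum.cong)
  also have "\<dots> = (\<Sum>l\<in>\<Lambda>. \<Sum>q\<in>UNIV. pmf (next_q V t) q * (\<Sum>a\<in>UNIV.
           \<Sum>c\<in>PiE UNIV (\<lambda>i. {..<num_kraus r (q i) (a i)}). X l q a c))"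
    by (rule sum_nested_swap)
  also have "\<dots> = (\<Sum>l\<in>\<Lambda>. run V (relabel l S) (Suc n) t (\<phi> l))"
    unfolding X_def using length_le_num_kraus
    by (simp add: sum_run_kraus_nth r_def)
  finally show ?case .
qed

(* Trace preservation of the common operators: their Gram matrices reduce to those of
   the original provers on genuine vectors, and to the identity on spurious ones. *)
lemma role_kraus_support:
  assumes "role_kraus r q a c x y \<noteq> 0"
  shows "if genuine y then genuine x \<and> x div D = y div D else x = y"
  using assms by (auto simp: role_kraus_def split: if_splits)

lemma sum_block:
  assumes y: "genuine y"
    and vanish: "\<And>x. x < N \<Longrightarrow> \<not> (genuine x \<and> x div D = y div D) \<Longrightarrow> F x = 0"
  shows "(\<Sum>x<N. F x) = (\<Sum>z<dims S (role (y div D)). F (y div D * D + z))"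
proof -
  let ?b = "y div D"
  have block: "genuine (?b * D + z) \<and> (?b * D + z) div D = ?b" if "z < dims S (role ?b)" for z
    using that y block_div[OF that] block_mod[OF that] by (simp add: genuine_def)
  have "(\<Sum>x<N. F x) = (\<Sum>x\<in>(\<lambda>z. ?b * D + z) ` {..<dims S (role ?b)}. F x)"
  proof (rule sum.mono_neutral_right)
    show "(\<lambda>z. ?b * D + z) ` {..<dims S (role ?b)} \<subseteq> {..<N}"
      using block genuine_less_N by auto
    show "\<forall>x\<in>{..<N} - (\<lambda>z. ?b * D + z) ` {..<dims S (role ?b)}. F x = 0"
    proof
      fix x assume x: "x \<in> {..<N} - (\<lambda>z. ?b * D + z) ` {..<dims S (role ?b)}"
      have "\<not> (genuine x \<and> x div D = ?b)"
      proof
        assume "genuine x \<and> x div D = ?b"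
        then have "x mod D < dims S (role ?b)" "x = ?b * D + x mod D"
          by (auto simp: genuine_def) (metis div_mult_mod_eq)
        then show False using x by blast
      qed
      then show "F x = 0" using x vanish by blast
    qed
  qed simp
  also have "\<dots> = (\<Sum>z<dims S (role ?b). F (?b * D + z))"
    by (subst sum.reindex) (auto simp: inj_on_def)
  finally show ?thesis .
qed

lemma role_kraus_gram_block:
  fixes r c y y' :: nat and q :: 'q and a :: 'a
  assumes "genuine y" "genuine y'" "y div D = y' div D"
  defines "Ks \<equiv> ops S (role (y div D)) r q a"
  shows "(\<Sum>x<N. cnj (role_kraus r q a c x y) * role_kraus r q a c x y')
       = (\<Sum>z<dims S (role (y div D)). cnj (kraus_nth Ks c z (y mod D)) * kraus_nth Ks c z (y' mod D))"
proof -
  have "(\<Sum>x<N. cnj (role_kraus r q a c x y) * role_kraus r q a c x y')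
      = (\<Sum>z<dims S (role (y div D)). cnj (role_kraus r q a c (y div D * D + z) y)
          * role_kraus r q a c (y div D * D + z) y')"
    using assms role_kraus_support by (intro sum_block) fastforce+
  also have "\<dots> = (\<Sum>z<dims S (role (y div D)). cnj (kraus_nth Ks c z (y mod D)) * kraus_nth Ks c z (y' mod D))"
  proof (intro sum.cong refl)
    fix z assume "z \<in> {..<dims S (role (y div D))}"
    then have z: "z < dims S (role (y div D))" by simp
    then have "genuine (y div D * D + z)"
      using assms block_div[OF z] block_mod[OF z] by (simp add: genuine_def)
    then show "cnj (role_kraus r q a c (y div D * D + z) y) * role_kraus r q a c (y div D * D + z) y'
        = cnj (kraus_nth Ks c z (y mod D)) * kraus_nth Ks c z (y' mod D)"
      using assms block_div[OF z] block_mod[OF z] by (simp add: role_kraus_def Ks_def)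
  qed
  finally show ?thesis .
qed

lemma role_kraus_gram:
  fixes r c y y' :: nat and q :: 'q and a :: 'a
  assumes "y < N" "y' < N"
  defines "Ks \<equiv> ops S (role (y div D)) r q a"
  shows "(\<Sum>x<N. cnj (role_kraus r q a c x y) * role_kraus r q a c x y') =
    (if genuine y \<and> genuine y' \<and> y div D = y' div D
     then (\<Sum>z<dims S (role (y div D)). cnj (kraus_nth Ks c z (y mod D)) * kraus_nth Ks c z (y' mod D))
     else if y = y' \<and> \<not> genuine y \<and> a = undefined \<and> c = 0 then 1 else 0)"
proof -
  consider (same_block) "genuine y" "genuine y'" "y div D = y' div D"
    | (spurious) "\<not> genuine y" "\<not> genuine y'"
    | (separated) "genuine y \<or> genuine y'" "\<not> (genuine y \<and> genuine y' \<and> y div D = y' div D)"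
    by blast
  then show ?thesis
  proof cases
    case same_block
    then show ?thesis by (simp add: role_kraus_gram_block Ks_def)
  next
    case spurious
    have "(\<Sum>x<N. cnj (role_kraus r q a c x y) * role_kraus r q a c x y')
        = (\<Sum>x<N. if x = y then (if y = y' \<and> a = undefined \<and> c = 0 then 1 else 0) else 0)"
      using spurious by (intro sum.cong refl) (auto simp: role_kraus_def)
    then show ?thesis using spurious assms(1) by simp
  next
    case separated
    have "role_kraus r q a c x y = 0 \<or> role_kraus r q a c x y' = 0" for x
    proof (rule ccontr)
      assume "\<not> (role_kraus r q a c x y = 0 \<or> role_kraus r q a c x y' = 0)"
      then have "if genuine y then genuine x \<and> x div D = y div D else x = y"
        "if genuine y' then genuine x \<and> x div D = y' div D else x = y'"
        using role_kraus_support by blast+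
      then show False using separated by (auto split: if_splits)
    qed
    then have "(\<Sum>x<N. cnj (role_kraus r q a c x y) * role_kraus r q a c x y') = 0"
      by (intro sum.neutral) auto
    then show ?thesis using separated by auto
  qed
qed

lemma sum_spurious_choice:
  "(\<Sum>a\<in>UNIV. \<Sum>c<num_kraus r q a. if P \<and> a = undefined \<and> c = 0 then 1 else 0) = (if P then 1 else (0::complex))"
proof (cases P)
  case True
  have "(\<Sum>c<num_kraus r q a. if a = undefined \<and> c = 0 then 1 else 0) = (if a = undefined then 1 else (0::complex))" for a
    using num_kraus_pos[of r q a] by (cases "a = undefined") simp_all
  then show ?thesis using True by simp
qed simp

lemma role_kraus_trace_preserving:
  fixes r :: nat and q :: 'q
  assumes tp: "\<And>m j j'. j < dims S m \<Longrightarrow> j' < dims S m \<Longrightarrow>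
      (\<Sum>a\<in>UNIV. sum_list (map (\<lambda>K. \<Sum>l<dims S m. cnj (K l j) * K l j') (ops S m r q a)))
        = (if j = j' then 1 else 0)"
    and "y < N" "y' < N"
  shows "(\<Sum>a\<in>UNIV. sum_list (map (\<lambda>K. \<Sum>x<N. cnj (K x y) * K x y')
            (map (role_kraus r q a) [0..<num_kraus r q a])))
       = (if y = y' then 1 else 0)"
proof -
  let ?gram = "\<lambda>a c. \<Sum>x<N. cnj (role_kraus r q a c x y) * role_kraus r q a c x y'"
  have "(\<Sum>a\<in>UNIV. sum_list (map (\<lambda>K. \<Sum>x<N. cnj (K x y) * K x y')
            (map (role_kraus r q a) [0..<num_kraus r q a])))
      = (\<Sum>a\<in>UNIV. \<Sum>c<num_kraus r q a. ?gram a c)"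
    by (simp add: interv_sum_list_conv_sum_set_nat atLeast0LessThan)
  also have "\<dots> = (if y = y' then 1 else 0)"
  proof (cases "genuine y \<and> genuine y' \<and> y div D = y' div D")
    case True
    define m where "m = role (y div D)"
    have "(\<Sum>a\<in>UNIV. \<Sum>c<num_kraus r q a. ?gram a c)
        = (\<Sum>a\<in>UNIV. \<Sum>c<num_kraus r q a. (\<lambda>K. \<Sum>z<dims S m. cnj (K z (y mod D)) * K z (y' mod D))
            (kraus_nth (ops S m r q a) c))"
      using True by (simp add: role_kraus_gram_block m_def)
    also have "\<dots> = (\<Sum>a\<in>UNIV. sum_list (map (\<lambda>K. \<Sum>z<dims S m. cnj (K z (y mod D)) * K z (y' mod D))
            (ops S m r q a)))"
      by (intro sum.cong refl sum_kraus_nth length_le_num_kraus) simp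
    also have "\<dots> = (if y mod D = y' mod D then 1 else 0)"
      using True by (intro tp) (auto simp: genuine_def m_def)
    also have "\<dots> = (if y = y' then 1 else 0)"
      using True by (metis div_mult_mod_eq)
    finally show ?thesis .
  next
    case False
    then have "(\<Sum>a\<in>UNIV. \<Sum>c<num_kraus r q a. ?gram a c)
        = (\<Sum>a\<in>UNIV. \<Sum>c<num_kraus r q a. if y = y' \<and> \<not> genuine y \<and> a = undefined \<and> c = 0 then 1 else 0)"
      by (simp only: role_kraus_gram[OF assms(2,3)] False if_False)
    also have "\<dots> = (if y = y' then 1 else 0)"
      using False sum_spurious_choice[where P="y = y' \<and> \<not> genuine y"] by (simp add: conj_assoc) blast
    finally show ?thesis .
  qed
  finally show ?thesis .
qed

lemma card_bij: "card {l :: 'p \<Rightarrow> 'p. bij l} = fact CARD('p)"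
proof -
  have "{l :: 'p \<Rightarrow> 'p. bij l} = {l. l permutes UNIV}"
    by (simp add: permutes_altdef)
  then show ?thesis by (simp add: card_permutations)
qed

lemma finite_bij: "finite {l :: 'p \<Rightarrow> 'p. bij l}"
  using card_bij by (metis card.infinite fact_nonzero)

lemma amp_sq: "(cmod amp)\<^sup>2 = 1 / fact CARD('p)"
proof -
  have "cmod amp = 1 / sqrt (fact CARD('p))"
    unfolding amp_def norm_of_real by simp
  then show ?thesis by (simp add: power_divide)
qed

lemma sym_state_outside: "J \<notin> idx (\<lambda>_. N) \<Longrightarrow> sym_state J = 0"
  unfolding sym_state_def lift_def using in_sector_idx by (intro sum.neutral) auto

lemma norm2_sym_state:
  assumes "norm2 (dims S) (state S) = 1"
  shows "norm2 (\<lambda>_. N) sym_state = 1"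
proof -
  have "norm2 (\<lambda>_. N) sym_state
      = (\<Sum>l\<in>{l. bij l}. norm2 (dims S \<circ> l) (relabel_vec l (\<lambda>j. amp * state S j)))"
    unfolding sym_state_def by (rule norm2_sum_lift[OF finite_bij])
  also have "\<dots> = (\<Sum>l\<in>{l :: 'p \<Rightarrow> 'p. bij l}. 1 / fact CARD('p))"
    by (simp add: norm2_relabel_vec norm2_scale amp_sq assms)
  finally show ?thesis by (simp add: card_bij)
qed

(* Permuting the registers of a lifted vector amounts to composing the role assignment
   with the inverse permutation; summing over all assignments gives a symmetric state. *)
lemma lift_relabel_comp:
  assumes l: "bij l" and \<sigma>: "bij \<sigma>"
  shows "lift l (relabel_vec l \<psi>) (J \<circ> \<sigma>) = lift (l \<circ> inv \<sigma>) (relabel_vec (l \<circ> inv \<sigma>) \<psi>) J"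
proof -
  have sector: "in_sector l (J \<circ> \<sigma>) \<longleftrightarrow> in_sector (l \<circ> inv \<sigma>) J"
    unfolding in_sector_def using \<sigma> by (metis bij_inv_eq_iff comp_apply)
  have inverse: "inv (l \<circ> inv \<sigma>) = \<sigma> \<circ> inv l"
    using o_inv_distrib[OF l bij_imp_bij_inv[OF \<sigma>]] inv_inv_eq[OF \<sigma>] by simp
  show ?thesis
    unfolding lift_def sector relabel_vec_def inverse by (simp add: comp_def)
qed

lemma sym_state_symmetric:
  assumes \<sigma>: "bij \<sigma>"
  shows "sym_state (J \<circ> \<sigma>) = sym_state J"
proof -
  let ?\<psi> = "\<lambda>j. amp * state S j"
  have "sym_state (J \<circ> \<sigma>) = (\<Sum>l\<in>{l. bij l}. lift (l \<circ> inv \<sigma>) (relabel_vec (l \<circ> inv \<sigma>) ?\<psi>) J)"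
    unfolding sym_state_def using \<sigma> by (intro sum.cong refl) (simp add: lift_relabel_comp)
  also have "\<dots> = sym_state J"
    unfolding sym_state_def
  proof (rule sum.reindex_bij_witness[where j="\<lambda>l. l \<circ> inv \<sigma>" and i="\<lambda>l. l \<circ> \<sigma>"])
    fix l :: "'p \<Rightarrow> 'p"
    show "l \<circ> inv \<sigma> \<circ> \<sigma> = l" "l \<circ> \<sigma> \<circ> inv \<sigma> = l"
      using \<sigma> by (simp_all add: comp_assoc)
    show "l \<in> {l. bij l} \<Longrightarrow> l \<circ> inv \<sigma> \<in> {l. bij l}" "l \<in> {l. bij l} \<Longrightarrow> l \<circ> \<sigma> \<in> {l. bij l}"
      using \<sigma> by (auto intro: bij_comp bij_imp_bij_inv)
  qed simp
  finally show ?thesis .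
qed

lemma sym_strategy_valid:
  assumes "valid_strategy V S"
  shows "valid_strategy V sym_strategy"
  unfolding valid_strategy_def
proof (intro conjI allI impI)
  show "0 < dims sym_strategy i" for i
    using N_pos by (simp add: sym_strategy_def)
  show "state sym_strategy j = 0" if "j \<notin> idx (dims sym_strategy)" for j
    using that sym_state_outside by (simp add: sym_strategy_def)
  show "norm2 (dims sym_strategy) (state sym_strategy) = 1"
    using assms norm2_sym_state by (simp add: sym_strategy_def valid_strategy_def)
  fix i r q y y' assume r: "r < rounds V" and y: "y < dims sym_strategy i" "y' < dims sym_strategy i"
  have "(\<Sum>a\<in>UNIV. sum_list (map (\<lambda>K. \<Sum>l<dims S m. cnj (K l j) * K l j') (ops S m r q a)))
      = (if j = j' then 1 else 0)" if "j < dims S m" "j' < dims S m" for m j j'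
    using assms r that unfolding valid_strategy_def by blast
  from role_kraus_trace_preserving[OF this] y
  show "(\<Sum>a\<in>UNIV. sum_list (map (\<lambda>K. \<Sum>x<dims sym_strategy i. cnj (K x y) * K x y')
      (ops sym_strategy i r q a))) = (if y = y' then 1 else 0)"
    by (simp add: sym_strategy_def)
qed

lemma sym_strategy_accept:
  assumes "symmetric_verifier V"
  shows "accept_prob V sym_strategy = accept_prob V S"
proof -
  let ?\<psi> = "\<lambda>j. amp * state S j"
  have "accept_prob V sym_strategy = (\<Sum>l\<in>{l. bij l}. run V (relabel l S) (rounds V) [] (relabel_vec l ?\<psi>))"
    unfolding accept_prob_def using run_superposition[OF finite_bij]
    by (simp add: sym_strategy_def sym_state_def)
  also have "\<dots> = (\<Sum>l\<in>{l :: 'p \<Rightarrow> 'p. bij l}. 1 / fact CARD('p) * accept_prob V S)"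
    using assms by (simp add: run_relabel perm_transcript_def run_scale amp_sq accept_prob_def)
  finally show ?thesis by (simp add: card_bij)
qed

lemma sym_strategy_identical: "dims sym_strategy i = dims sym_strategy i' \<and> ops sym_strategy i = ops sym_strategy i'"
  by (simp add: sym_strategy_def)

end

theorem lemma3:
  fixes V :: "('p::finite, 'q::finite, 'a::finite) verifier"
    and S :: "('p, 'q, 'a) strategy"
  assumes "valid_verifier V"
    and "symmetric_verifier V"
    and "valid_strategy V S"
  shows "\<exists>S' :: ('p, 'q, 'a) strategy.
           valid_strategy V S' \<and>
           accept_prob V S' = accept_prob V S \<and>
           (\<forall>i i'. dims S' i = dims S' i' \<and> ops S' i = ops S' i') \<and>
           (\<forall>\<sigma> j. bij \<sigma> \<longrightarrow> state S' (j \<circ> \<sigma>) = state S' j)"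
proof -
  obtain f :: "'p \<Rightarrow> nat" where "bij_betw f UNIV {..<CARD('p)}"
    using ex_bij_betw_finite_nat[of "UNIV :: 'p set"] by (auto simp: atLeast0LessThan)
  moreover have "\<And>i. 0 < dims S i"
    using assms(3) by (simp add: valid_strategy_def)
  ultimately interpret role_embedding S f
    by unfold_locales
  show ?thesis
    using sym_strategy_valid[OF assms(3)] sym_strategy_accept[OF assms(2)]
      sym_strategy_identical sym_state_symmetric
    by (auto simp: sym_strategy_def)
qed

end
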